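(* Let $\boldsymbol{z}=(z_1,\dots,z_s)$ be a vector of pairwise distinct complex nodes with $|z_j|=1$ for $j=1,\dots,s$, and let $\delta_{j,k}=|\mathrm{Arg}(z_j/z_k)|$. Then \[\sigma_{\min}\big(\mathbf{U}_{2s}(\boldsymbol{z})\big)\ge\frac{\pi^{2(1-s)}}{\sqrt{2s}}\min_{1\le j\le s}\gamma_j\prod_{k\ne j}\delta_{j,k}^2,\qquad\text{where }\ \gamma_j=\min\Big(\frac12,\ \frac{2}{5\pi}\Big(\sum_{k\ne j}\delta_{j,k}^{-1}\Big)^{-1}\Big).\]
   Context: For $\boldsymbol{z}=(z_1,\dots,z_s)$, $\mathbf{U}_{2s}(\boldsymbol{z})$ is the square $2s\times 2s$ confluent Vandermonde matrix $[\,z_j^k\quad kz_j^{k-1}\,]^{j=1,\dots,s}_{k=0,\dots,2s-1}$, i.e. row $k$ has entries $z_1^k,\dots,z_s^k,kz_1^{k-1},\dots,kz_s^{k-1}$. $\mathrm{Arg}$ is the principal argument in $(-\pi,\pi]$; $\sigma_{\min}$ is the smallest singular value. *)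

theory Defs
  imports "HOL-Analysis.Analysis"
begin

text \<open>Nodes are indexed 0..s-1 (z :: nat => complex).\<close>
definition conf_vandermonde :: "nat \<Rightarrow> (nat \<Rightarrow> complex) \<Rightarrow> nat \<Rightarrow> nat \<Rightarrow> complex" where
  "conf_vandermonde s z k j =
     (if j < s then z j ^ k else of_nat k * z (j - s) ^ (k - 1))"

definition vnorm :: "nat \<Rightarrow> (nat \<Rightarrow> complex) \<Rightarrow> real" where
  "vnorm n x = sqrt (\<Sum>i<n. (cmod (x i))\<^sup>2)"

definition mat_vec :: "nat \<Rightarrow> (nat \<Rightarrow> nat \<Rightarrow> complex) \<Rightarrow> (nat \<Rightarrow> complex) \<Rightarrow> nat \<Rightarrow> complex" where
  "mat_vec n A x = (\<lambda>k. \<Sum>j<n. A k j * x j)"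

definition sigma_min :: "nat \<Rightarrow> (nat \<Rightarrow> nat \<Rightarrow> complex) \<Rightarrow> real" where
  "sigma_min n A = Inf {vnorm n (mat_vec n A x) | x. vnorm n x = 1}"

definition delta :: "(nat \<Rightarrow> complex) \<Rightarrow> nat \<Rightarrow> nat \<Rightarrow> real" where
  "delta z j k = \<bar>Arg (z j / z k)\<bar>"

text \<open>gamma_j = min(1/2, 2/(5 pi) * (sum_{k<>j} 1/delta_{jk})^{-1}); for s = 1 the sum is
empty and its inverse is +infinity, so gamma_j = 1/2.\<close>
definition gamma :: "nat \<Rightarrow> (nat \<Rightarrow> complex) \<Rightarrow> nat \<Rightarrow> real" where
  "gamma s z j =
     (let S = (\<Sum>k\<in>{..<s} - {j}. 1 / delta z j k) in
      if S = 0 then 1/2 else min (1/2) (2 / (5 * pi) * (1 / S)))"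

end

theory Submission
  imports Defs "HOL-Computational_Algebra.Polynomial"
begin

text \<open>
  The coefficient vectors of the Hermite interpolation basis at the nodes (\<open>P\<^sub>j(z\<^sub>k) = [j = k]\<close>,
  \<open>P\<^sub>j'(z\<^sub>k) = 0\<close>, \<open>Q\<^sub>j(z\<^sub>k) = 0\<close>, \<open>Q\<^sub>j'(z\<^sub>k) = [j = k]\<close>) form a left inverse of \<open>U\<^sub>2\<^sub>s(z)\<close>,
  so \<open>\<sigma>\<^sub>m\<^sub>i\<^sub>n\<close> is at least the reciprocal of its Frobenius norm. By Parseval's identity at the
  roots of unity, the squared coefficient norm of a polynomial is at most its squared maximum
  on the unit circle. With \<open>L\<^sub>j\<close> the Lagrange basis polynomial, \<open>P\<^sub>j = (1 - 2 L\<^sub>j'(z\<^sub>j) (x - z\<^sub>j)) L\<^sub>j\<^sup>2\<close>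
  and \<open>Q\<^sub>j = (x - z\<^sub>j) L\<^sub>j\<^sup>2\<close>; Jordan's inequality \<open>|z\<^sub>j - z\<^sub>k| \<ge> 2 \<delta>\<^sub>j\<^sub>k / \<pi>\<close> bounds \<open>|L\<^sub>j|\<close> on
  the circle by \<open>\<Prod>\<^sub>k \<pi> / \<delta>\<^sub>j\<^sub>k\<close> and \<open>|L\<^sub>j'(z\<^sub>j)|\<close> by \<open>\<pi>/2 \<Sum>\<^sub>k 1 / \<delta>\<^sub>j\<^sub>k\<close>, and \<open>\<gamma>\<^sub>j\<close> absorbs
  the remaining factors.
\<close>

section \<open>Chords of the unit circle\<close>

lemma Jordan_inequality:
  fixes t :: real
  assumes "0 \<le> t" "t \<le> pi / 2"
  shows "2 / pi * t \<le> sin t"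
proof -
  have "convex_on {0..pi/2} (\<lambda>x. - sin x)"
  proof (rule f''_ge0_imp_convex[where f'="\<lambda>x. - cos x" and f''="\<lambda>x. sin x"])
    fix x :: real
    assume "x \<in> {0..pi/2}"
    then show "0 \<le> sin x" by (intro sin_ge_zero) auto
  qed (auto intro!: derivative_eq_intros)
  moreover have "2 / pi * t \<in> {0..1}" using assms by (auto simp: field_simps)
  ultimately have "- sin ((1 - 2 / pi * t) *\<^sub>R 0 + (2 / pi * t) *\<^sub>R (pi / 2))
      \<le> (1 - 2 / pi * t) * - sin 0 + 2 / pi * t * - sin (pi / 2)"
    by (intro convex_onD) auto
  then show ?thesis by simp
qed

lemma unit_circle_chord_ge_Arg:
  fixes u v :: complex
  assumes "cmod u = 1" "cmod v = 1"
  shows "2 / pi * \<bar>Arg (u / v)\<bar> \<le> cmod (u - v)"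
proof -
  define \<theta> where "\<theta> = Arg (u / v)"
  have "u \<noteq> 0" "v \<noteq> 0" using assms by auto
  then have "u / v = exp (\<i> * of_real \<theta>)"
    using Arg_eq[of "u / v"] assms by (simp add: \<theta>_def norm_divide)
  moreover have "u - v = v * (u / v - 1)" using \<open>v \<noteq> 0\<close> by (simp add: field_simps)
  ultimately have "cmod (u - v) = cmod (exp (\<i> * of_real \<theta>) - 1)"
    using assms(2) by (simp add: norm_mult)
  also have "\<dots> = 2 * \<bar>sin (\<theta> / 2)\<bar>" by (rule dist_exp_i_1)
  also have "\<bar>sin (\<theta> / 2)\<bar> = \<bar>sin (\<bar>\<theta>\<bar> / 2)\<bar>"
    by (cases "0 \<le> \<theta>") simp_all
  also have "\<dots> = sin (\<bar>\<theta>\<bar> / 2)"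
    using Arg_le_pi[of "u / v"] mpi_less_Arg[of "u / v"]
    by (intro abs_of_nonneg sin_ge_zero) (auto simp: \<theta>_def)
  finally have "cmod (u - v) = 2 * sin (\<bar>\<theta>\<bar> / 2)" .
  moreover have "2 / pi * (\<bar>\<theta>\<bar> / 2) \<le> sin (\<bar>\<theta>\<bar> / 2)"
    using Arg_le_pi[of "u / v"] mpi_less_Arg[of "u / v"] by (intro Jordan_inequality) (auto simp: \<theta>_def)
  ultimately show ?thesis by (simp add: \<theta>_def)
qed

lemma Arg_div_unit_eq_0_iff:
  fixes u v :: complex
  assumes "cmod u = 1" "cmod v = 1"
  shows "Arg (u / v) = 0 \<longleftrightarrow> u = v"
proof
  assume "Arg (u / v) = 0"
  moreover have "u \<noteq> 0" "v \<noteq> 0" using assms by auto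
  ultimately have "u / v = 1"
    using Arg_eq[of "u / v"] assms by (simp add: norm_divide)
  then show "u = v" using assms by (auto simp: field_simps)
qed (use assms in auto)

lemma parallelogram_law_complex:
  fixes p q :: complex
  shows "(cmod (p + q))\<^sup>2 + (cmod (p - q))\<^sup>2 = 2 * ((cmod p)\<^sup>2 + (cmod q)\<^sup>2)"
  unfolding cmod_power2 by (simp add: power2_eq_square algebra_simps)

lemma unit_circle_distance_product_le:
  fixes x u v :: complex
  assumes "cmod x = 1" "cmod u = 1" "cmod v = 1"
  shows "cmod (x - u) * (cmod (x - v))\<^sup>2 \<le> 4 + 2 * cmod (u + v)"
proof -
  define a b e where "a = cmod (x - u)" and "b = cmod (x - v)" and "e = cmod (u + v)"
  have "a\<^sup>2 + b\<^sup>2 = ((cmod (2 * x - (u + v)))\<^sup>2 + (cmod (u - v))\<^sup>2) / 2"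
    using parallelogram_law_complex[of "x - u" "x - v"]
    by (simp add: a_def b_def algebra_simps norm_minus_commute)
  moreover have "(cmod (u - v))\<^sup>2 = 4 - e\<^sup>2"
    using parallelogram_law_complex[of u v] assms by (simp add: e_def)
  moreover have "cmod (2 * x - (u + v)) \<le> 2 + e"
    using norm_triangle_ineq4[of "2 * x" "u + v"] assms by (simp add: e_def norm_mult)
  then have "(cmod (2 * x - (u + v)))\<^sup>2 \<le> 4 + 4 * e + e\<^sup>2"
    using power_mono[of _ "2 + e" 2] by (simp add: power2_eq_square algebra_simps)
  ultimately have "a\<^sup>2 + b\<^sup>2 \<le> 4 + 2 * e" by (simp add: field_simps)
  moreover have "a * b * b \<le> a * b * 2"
    using norm_triangle_ineq4[of x v] assms by (intro mult_left_mono) (auto simp: a_def b_def)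
  moreover have "2 * a * b \<le> a\<^sup>2 + b\<^sup>2" by (rule sum_squares_bound)
  ultimately have "a * b * b \<le> 4 + 2 * e" by linarith
  then show ?thesis by (simp add: a_def b_def e_def power2_eq_square mult_ac)
qed

section \<open>Parseval's identity at the roots of unity\<close>

lemma root_of_unity_power_orthogonal:
  fixes N k l :: nat
  defines "w \<equiv> exp (2 * of_real pi * \<i> / of_nat N)"
  assumes "k < N" "l < N"
  shows "(\<Sum>m<N. (w ^ m) ^ k * cnj ((w ^ m) ^ l)) = (if k = l then of_nat N else 0)"
proof -
  have N: "1 \<le> N" using assms by simp
  have w_power: "w ^ j = exp (2 * of_real pi * \<i> * of_nat j / of_nat N)" for j
    unfolding w_def by (simp add: exp_of_nat_mult[symmetric] mult_ac)
  have "w * cnj w = 1"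
    using complex_norm_square[of w] by (simp add: w_def)
  define \<zeta> where "\<zeta> = w ^ k * cnj w ^ l"
  have "(w ^ m) ^ k * cnj ((w ^ m) ^ l) = \<zeta> ^ m" for m
    by (simp add: \<zeta>_def power_mult_distrib power_mult[symmetric] mult.commute)
  then have geometric: "(\<Sum>m<N. (w ^ m) ^ k * cnj ((w ^ m) ^ l)) = (\<Sum>m<N. \<zeta> ^ m)"
    by simp
  have "\<zeta> * w ^ l = w ^ k"
    using \<open>w * cnj w = 1\<close> by (simp add: \<zeta>_def mult.assoc mult.commute[of "cnj w"]
        flip: power_mult_distrib)
  show ?thesis
  proof (cases "k = l")
    case True
    then have "\<zeta> = 1"
      using \<open>w * cnj w = 1\<close> by (simp add: \<zeta>_def flip: power_mult_distrib)
    then show ?thesis unfolding geometric using True by simp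
  next
    case False
    have "w ^ N = 1" using N by (simp add: w_power)
    moreover have "\<zeta> ^ N = (w ^ N) ^ k * cnj (w ^ N) ^ l"
      by (simp add: \<zeta>_def power_mult_distrib mult.commute flip: power_mult)
    ultimately have "\<zeta> ^ N = 1" by simp
    moreover have "\<zeta> \<noteq> 1"
    proof
      assume "\<zeta> = 1"
      then have "w ^ l = w ^ k" using \<open>\<zeta> * w ^ l = w ^ k\<close> by simp
      then have "l mod N = k mod N" using complex_root_unity_eq[OF N] by (simp add: w_power)
      then show False using False assms by simp
    qed
    ultimately have "(\<Sum>m<N. \<zeta> ^ m) = 0" by (simp add: sum_gp_strict)
    then show ?thesis unfolding geometric using False by simp
  qed
qed

lemma poly_eq_sum_coeff:
  fixes p :: "'a::comm_semiring_1 poly"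
  assumes "degree p < n"
  shows "poly p x = (\<Sum>k<n. coeff p k * x ^ k)"
  unfolding poly_altdef using assms
  by (intro sum.mono_neutral_left) (auto simp: coeff_eq_0)

lemma Parseval_roots_of_unity:
  fixes p :: "complex poly" and N :: nat
  defines "w \<equiv> exp (2 * of_real pi * \<i> / of_nat N)"
  assumes "degree p < N"
  shows "(\<Sum>m<N. (cmod (poly p (w ^ m)))\<^sup>2) = of_nat N * (\<Sum>k<N. (cmod (coeff p k))\<^sup>2)"
proof -
  let ?a = "coeff p"
  note orthogonal = root_of_unity_power_orthogonal[of _ N, folded w_def]
  have "complex_of_real (\<Sum>m<N. (cmod (poly p (w ^ m)))\<^sup>2)
      = (\<Sum>m<N. (\<Sum>k<N. ?a k * (w ^ m) ^ k) * cnj (\<Sum>l<N. ?a l * (w ^ m) ^ l))"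
    unfolding of_real_sum complex_norm_square poly_eq_sum_coeff[OF assms(2)] ..
  also have "\<dots> = (\<Sum>m<N. \<Sum>k<N. \<Sum>l<N. ?a k * cnj (?a l) * ((w ^ m) ^ k * cnj ((w ^ m) ^ l)))"
    unfolding cnj_sum sum_product by (intro sum.cong refl) (simp add: mult_ac)
  also have "\<dots> = (\<Sum>k<N. \<Sum>l<N. ?a k * cnj (?a l) * (\<Sum>m<N. (w ^ m) ^ k * cnj ((w ^ m) ^ l)))"
    unfolding sum_distrib_left by (subst sum.swap) (intro sum.cong refl sum.swap)
  also have "\<dots> = (\<Sum>k<N. \<Sum>l<N. ?a k * cnj (?a l) * (if k = l then of_nat N else 0))"
    by (intro sum.cong refl) (simp only: orthogonal lessThan_iff)
  also have "\<dots> = (\<Sum>k<N. ?a k * cnj (?a k) * of_nat N)"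
    by (simp add: if_distrib cong: if_cong)
  also have "\<dots> = complex_of_real (of_nat N * (\<Sum>k<N. (cmod (?a k))\<^sup>2))"
    unfolding of_real_mult of_real_sum complex_norm_square sum_distrib_left
    by (simp add: mult_ac)
  finally show ?thesis by (simp only: of_real_eq_iff)
qed

lemma sum_cmod_coeff_sq_le:
  fixes p :: "complex poly"
  assumes "degree p < N" and sup: "\<And>x. cmod x = 1 \<Longrightarrow> cmod (poly p x) \<le> B"
  shows "(\<Sum>k<N. (cmod (coeff p k))\<^sup>2) \<le> B\<^sup>2"
proof -
  define w :: complex where "w = exp (2 * of_real pi * \<i> / of_nat N)"
  have "(cmod (poly p (w ^ m)))\<^sup>2 \<le> B\<^sup>2" for m
    using sup[of "w ^ m"] by (intro power_mono) (auto simp: w_def norm_power)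
  then have "(\<Sum>m<N. (cmod (poly p (w ^ m)))\<^sup>2) \<le> of_nat N * B\<^sup>2"
    using sum_bounded_above[of "{..<N}" _ "B\<^sup>2"] by simp
  then have "real N * (\<Sum>k<N. (cmod (coeff p k))\<^sup>2) \<le> real N * B\<^sup>2"
    using Parseval_roots_of_unity[OF assms(1), folded w_def] by simp
  moreover have "0 < N" using assms(1) by simp
  ultimately show ?thesis by simp
qed

section \<open>Left inverses and the smallest singular value\<close>

lemma vnorm_nonneg: "0 \<le> vnorm n x"
  unfolding vnorm_def by (intro real_sqrt_ge_zero sum_nonneg) simp

lemma mat_vec_left_inverse:
  assumes left_inv: "\<And>r j. r < n \<Longrightarrow> j < n \<Longrightarrow> (\<Sum>k<n. H r k * A k j) = (if r = j then 1 else 0)"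
    and "r < n"
  shows "(\<Sum>k<n. H r k * mat_vec n A x k) = x r"
proof -
  have "(\<Sum>k<n. H r k * mat_vec n A x k) = (\<Sum>j<n. (\<Sum>k<n. H r k * A k j) * x j)"
    unfolding mat_vec_def sum_distrib_left sum_distrib_right
    by (subst sum.swap) (simp add: mult_ac)
  also have "\<dots> = (\<Sum>j<n. if r = j then x j else 0)"
    using left_inv \<open>r < n\<close> by (intro sum.cong) auto
  also have "\<dots> = x r" using \<open>r < n\<close> by simp
  finally show ?thesis .
qed

lemma norm_mat_vec_ge_left_inverse:
  assumes left_inv: "\<And>r j. r < n \<Longrightarrow> j < n \<Longrightarrow> (\<Sum>k<n. H r k * A k j) = (if r = j then 1 else 0)"
    and frobenius: "(\<Sum>r<n. \<Sum>k<n. (cmod (H r k))\<^sup>2) \<le> B\<^sup>2" and "0 < B"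
    and "vnorm n x = 1"
  shows "1 / B \<le> vnorm n (mat_vec n A x)"
proof -
  define y where "y = mat_vec n A x"
  have "(cmod (x r))\<^sup>2 \<le> (\<Sum>k<n. (cmod (H r k))\<^sup>2) * (\<Sum>k<n. (cmod (y k))\<^sup>2)" if "r < n" for r
  proof -
    have "cmod (x r) \<le> (\<Sum>k<n. cmod (H r k) * cmod (y k))"
      using norm_sum[of "\<lambda>k. H r k * y k" "{..<n}"] mat_vec_left_inverse[OF left_inv that, of x]
      by (simp add: y_def norm_mult)
    then have "(cmod (x r))\<^sup>2 \<le> (\<Sum>k<n. cmod (H r k) * cmod (y k))\<^sup>2"
      by (simp add: power_mono)
    also have "\<dots> \<le> (\<Sum>k<n. (cmod (H r k))\<^sup>2) * (\<Sum>k<n. (cmod (y k))\<^sup>2)"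
      by (rule Cauchy_Schwarz_ineq_sum)
    finally show ?thesis .
  qed
  then have "(\<Sum>r<n. (cmod (x r))\<^sup>2) \<le> (\<Sum>r<n. \<Sum>k<n. (cmod (H r k))\<^sup>2) * (\<Sum>k<n. (cmod (y k))\<^sup>2)"
    unfolding sum_distrib_right by (intro sum_mono) auto
  moreover have "(\<Sum>r<n. (cmod (x r))\<^sup>2) = 1\<^sup>2"
    using \<open>vnorm n x = 1\<close> real_sqrt_eq_1_iff unfolding vnorm_def power_one by blast
  ultimately have "1\<^sup>2 \<le> (\<Sum>r<n. \<Sum>k<n. (cmod (H r k))\<^sup>2) * (\<Sum>k<n. (cmod (y k))\<^sup>2)"
    by (simp only:)
  also have "\<dots> \<le> B\<^sup>2 * (\<Sum>k<n. (cmod (y k))\<^sup>2)"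
    using frobenius by (intro mult_right_mono sum_nonneg) auto
  also have "\<dots> = (B * vnorm n y)\<^sup>2"
    unfolding vnorm_def power_mult_distrib by (subst real_sqrt_pow2) (auto intro: sum_nonneg)
  finally have "1 \<le> B * vnorm n y"
    by (rule power2_le_imp_le) (use \<open>0 < B\<close> vnorm_nonneg[of n y] in simp)
  then show ?thesis
    using \<open>0 < B\<close> by (simp add: y_def divide_le_eq mult.commute)
qed

lemma sigma_min_ge_left_inverse:
  assumes "0 < n"
    and left_inv: "\<And>r j. r < n \<Longrightarrow> j < n \<Longrightarrow> (\<Sum>k<n. H r k * A k j) = (if r = j then 1 else 0)"
    and frobenius: "(\<Sum>r<n. \<Sum>k<n. (cmod (H r k))\<^sup>2) \<le> B\<^sup>2" and "0 < B"
  shows "1 / B \<le> sigma_min n A"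
  unfolding sigma_min_def
proof (rule cInf_greatest)
  have "(\<Sum>k<n. (cmod (if k = 0 then 1 else 0))\<^sup>2) = (\<Sum>k<n. if k = 0 then 1 else 0)"
    by (intro sum.cong) auto
  then have "vnorm n (\<lambda>k. if k = 0 then 1 else 0) = 1"
    using \<open>0 < n\<close> by (simp add: vnorm_def)
  then show "{vnorm n (mat_vec n A x) |x. vnorm n x = 1} \<noteq> {}" by blast
qed (use norm_mat_vec_ge_left_inverse[OF left_inv frobenius \<open>0 < B\<close>] in blast)

section \<open>Hermite interpolation at the nodes\<close>

lemma poly_pderiv_eq_sum_coeff:
  fixes p :: "'a::real_normed_field poly"
  assumes "degree p < n"
  shows "poly (pderiv p) x = (\<Sum>k<n. coeff p k * (of_nat k * x ^ (k - 1)))"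
proof (rule DERIV_unique)
  show "(poly p has_field_derivative poly (pderiv p) x) (at x)"
    by (rule poly_DERIV)
  have "poly p = (\<lambda>x. \<Sum>k<n. coeff p k * x ^ k)"
    using poly_eq_sum_coeff[OF assms] by auto
  then show "(poly p has_field_derivative (\<Sum>k<n. coeff p k * (of_nat k * x ^ (k - 1)))) (at x)"
    by (auto intro!: derivative_eq_intros simp: mult_ac)
qed

lemma sum_coeff_conf_vandermonde:
  fixes p :: "complex poly"
  assumes "degree p < n"
  shows "(\<Sum>k<n. coeff p k * conf_vandermonde s z k j)
           = (if j < s then poly p (z j) else poly (pderiv p) (z (j - s)))"
  using poly_eq_sum_coeff[OF assms] poly_pderiv_eq_sum_coeff[OF assms]
  by (simp add: conf_vandermonde_def)

definition lagrange_basis :: "nat \<Rightarrow> (nat \<Rightarrow> complex) \<Rightarrow> nat \<Rightarrow> complex poly" where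
  "lagrange_basis s z j = (\<Prod>k\<in>{..<s} - {j}. [:- z k / (z j - z k), 1 / (z j - z k):])"

text \<open>The factor \<open>1 - c (x - z\<^sub>j)\<close> with \<open>c = 2 L\<^sub>j'(z\<^sub>j)\<close> cancels the derivative of \<open>L\<^sub>j\<^sup>2\<close> at \<open>z\<^sub>j\<close>.\<close>
definition hermite_value_basis :: "nat \<Rightarrow> (nat \<Rightarrow> complex) \<Rightarrow> nat \<Rightarrow> complex poly" where
  "hermite_value_basis s z j =
     (1 - smult (2 * poly (pderiv (lagrange_basis s z j)) (z j)) [:- z j, 1:]) * lagrange_basis s z j ^ 2"

definition hermite_slope_basis :: "nat \<Rightarrow> (nat \<Rightarrow> complex) \<Rightarrow> nat \<Rightarrow> complex poly" where
  "hermite_slope_basis s z j = [:- z j, 1:] * lagrange_basis s z j ^ 2"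

definition hermite_basis :: "nat \<Rightarrow> (nat \<Rightarrow> complex) \<Rightarrow> nat \<Rightarrow> complex poly" where
  "hermite_basis s z r =
     (if r < s then hermite_value_basis s z r else hermite_slope_basis s z (r - s))"

lemma poly_lagrange_basis:
  "poly (lagrange_basis s z j) x = (\<Prod>k\<in>{..<s} - {j}. (x - z k) / (z j - z k))"
  by (simp add: lagrange_basis_def poly_prod diff_divide_distrib)

lemma degree_lagrange_basis:
  assumes "j < s"
  shows "degree (lagrange_basis s z j) \<le> s - 1"
proof -
  have "degree (lagrange_basis s z j) \<le> (\<Sum>k\<in>{..<s} - {j}. 1)"
    unfolding lagrange_basis_def
    by (intro order_trans[OF degree_prod_sum_le] sum_mono) (auto intro: order_trans[OF degree_pCons_le])
  then show ?thesis using assms by simp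
qed

lemma degree_hermite_basis:
  assumes "r < 2 * s"
  shows "degree (hermite_basis s z r) < 2 * s"
proof -
  have square: "degree (G * lagrange_basis s z j ^ 2) < 2 * s" if "degree G \<le> 1" "j < s" for G j
    using degree_mult_le[of G "lagrange_basis s z j ^ 2"] degree_power_le[of "lagrange_basis s z j" 2]
      degree_lagrange_basis[OF \<open>j < s\<close>, of z] that by linarith
  show ?thesis
  proof (cases "r < s")
    case True
    show ?thesis
      unfolding hermite_basis_def if_P[OF True] hermite_value_basis_def
      by (rule square[OF _ True]) (simp add: degree_diff_le)
  next
    case False
    show ?thesis
      unfolding hermite_basis_def if_not_P[OF False] hermite_slope_basis_def
      by (rule square) (use False assms in simp_all)
  qed
qed

lemma lagrange_basis_at_nodes:
  assumes "inj_on z {..<s}" "j < s" "k < s"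
  shows "poly (lagrange_basis s z j) (z k) = (if k = j then 1 else 0)"
proof (cases "k = j")
  case True
  have "z j \<noteq> z i" if "i \<in> {..<s} - {j}" for i
    using assms that by (auto simp: inj_on_def)
  then show ?thesis unfolding poly_lagrange_basis using True by (auto intro!: prod.neutral)
next
  case False
  then show ?thesis unfolding poly_lagrange_basis using assms by (auto intro!: prod_zero)
qed

lemma pderiv_lagrange_basis_at_node:
  assumes "inj_on z {..<s}" "j < s"
  shows "poly (pderiv (lagrange_basis s z j)) (z j) = (\<Sum>k\<in>{..<s} - {j}. 1 / (z j - z k))"
proof -
  define f where "f k = [:- z k / (z j - z k), 1 / (z j - z k):]" for k
  have "poly (f k) (z j) = 1" if "k \<in> {..<s} - {j}" for k
  proof -
    have "z j \<noteq> z k" using assms that by (auto simp: inj_on_def)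
    moreover have "poly (f k) x = (x - z k) / (z j - z k)" for x
      by (simp add: f_def diff_divide_distrib)
    ultimately show ?thesis by simp
  qed
  then have "(\<Prod>i\<in>{..<s} - {j} - {k}. poly (f i) (z j)) = 1" for k
    by (intro prod.neutral) auto
  then show ?thesis
    unfolding lagrange_basis_def f_def[symmetric] pderiv_prod poly_sum poly_mult poly_prod
    by (simp add: f_def pderiv_pCons)
qed

lemma hermite_basis_interpolates:
  assumes "inj_on z {..<s}" "r < 2 * s" "j < 2 * s"
  shows "(if j < s then poly (hermite_basis s z r) (z j)
          else poly (pderiv (hermite_basis s z r)) (z (j - s))) = (if r = j then 1 else 0)"
  using assms lagrange_basis_at_nodes[OF assms(1)]
  by (auto simp: hermite_basis_def hermite_value_basis_def hermite_slope_basis_def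
      pderiv_mult pderiv_power pderiv_diff pderiv_smult pderiv_pCons)

lemma hermite_basis_left_inverse:
  assumes "inj_on z {..<s}" "r < 2 * s" "j < 2 * s"
  shows "(\<Sum>k<2 * s. coeff (hermite_basis s z r) k * conf_vandermonde s z k j)
           = (if r = j then 1 else 0)"
  using sum_coeff_conf_vandermonde[OF degree_hermite_basis[OF assms(2)]]
    hermite_basis_interpolates[OF assms] by simp

section \<open>Bounds for nodes on the unit circle\<close>

text \<open>Since \<open>\<gamma>\<^sub>j \<le> 2 / (5 t)\<close> for \<open>t = \<pi> \<Sum>\<^sub>k 1 / \<delta>\<^sub>j\<^sub>k\<close>, the right-hand side times \<open>\<gamma>\<^sub>j\<^sup>2\<close> is at most 2.
  The alternative \<open>q\<^sup>2 \<le> 4 - 2 / t\<^sup>2\<close> is what two nearly antipodal nodes (\<open>t\<close> close to 1) require.\<close>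
lemma hermite_weight_ineq:
  fixes t q :: real
  assumes "1 \<le> t" "q\<^sup>2 \<le> 4" "2 \<le> t \<or> q\<^sup>2 \<le> 4 - 2 / t\<^sup>2"
  shows "(1 + 2 * t)\<^sup>2 + q\<^sup>2 \<le> 25 / 2 * t\<^sup>2"
proof -
  have expand: "(1 + 2 * t)\<^sup>2 = 1 + 4 * t + 4 * t\<^sup>2" by (simp add: power2_eq_square algebra_simps)
  have "1 \<le> t\<^sup>2" using assms(1) by simp
  show ?thesis
  proof (cases "11 / 10 \<le> t")
    case True
    then have "11 / 10 * t \<le> t\<^sup>2"
      unfolding power2_eq_square using assms(1) by (intro mult_right_mono) auto
    then show ?thesis using True assms(2) expand by linarith
  next
    case False
    then have "t\<^sup>2 \<le> (11 / 10)\<^sup>2" using assms(1) by (intro power_mono) auto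
    then have "2 / (11 / 10)\<^sup>2 \<le> 2 / t\<^sup>2"
      using assms(1) by (intro divide_left_mono) auto
    then show ?thesis using False assms(3) expand \<open>1 \<le> t\<^sup>2\<close> by (simp add: power_divide)
  qed
qed

lemma sum_inverse_delta_nonneg: "0 \<le> (\<Sum>k\<in>A. 1 / delta z j k)"
  by (intro sum_nonneg) (simp add: delta_def)

lemma delta_le_pi: "delta z j k \<le> pi"
  using Arg_le_pi[of "z j / z k"] mpi_less_Arg[of "z j / z k"] unfolding delta_def by linarith

lemma gamma_pos: "0 < gamma s z j"
  using sum_inverse_delta_nonneg[of z j "{..<s} - {j}"] unfolding gamma_def Let_def by auto

definition lagrange_bound :: "nat \<Rightarrow> (nat \<Rightarrow> complex) \<Rightarrow> nat \<Rightarrow> real" where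
  "lagrange_bound s z j = (\<Prod>k\<in>{..<s} - {j}. pi / delta z j k)"

definition node_weight :: "nat \<Rightarrow> (nat \<Rightarrow> complex) \<Rightarrow> nat \<Rightarrow> real" where
  "node_weight s z j = gamma s z j * (\<Prod>k\<in>{..<s} - {j}. (delta z j k)\<^sup>2)"

lemma lagrange_bound_sq_div_gamma:
  assumes "j < s"
  shows "(lagrange_bound s z j)\<^sup>2 / gamma s z j = pi ^ (2 * (s - 1)) / node_weight s z j"
proof -
  have "lagrange_bound s z j = pi ^ (s - 1) / (\<Prod>k\<in>{..<s} - {j}. delta z j k)"
    using assms by (simp add: lagrange_bound_def prod_dividef)
  then show ?thesis
    by (simp add: node_weight_def power_divide prod_power_distrib mult.commute flip: power_mult)
qed

locale unit_nodes =
  fixes s :: nat and z :: "nat \<Rightarrow> complex"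
  assumes distinct: "inj_on z {..<s}"
    and on_circle: "\<And>j. j < s \<Longrightarrow> cmod (z j) = 1"
begin

lemma delta_pos:
  assumes "j < s" "k < s" "k \<noteq> j"
  shows "0 < delta z j k"
proof -
  have "z j \<noteq> z k" using distinct assms by (auto simp: inj_on_def)
  then show ?thesis
    using Arg_div_unit_eq_0_iff[OF on_circle on_circle] assms by (auto simp: delta_def)
qed

lemma chord_ge_delta:
  assumes "j < s" "k < s"
  shows "2 / pi * delta z j k \<le> cmod (z j - z k)"
  unfolding delta_def using unit_circle_chord_ge_Arg on_circle assms by simp

lemma inverse_chord_le:
  assumes "j < s" "k < s" "k \<noteq> j"
  shows "1 / cmod (z j - z k) \<le> pi / (2 * delta z j k)"
proof -
  have "0 < 2 / pi * delta z j k" using delta_pos[OF assms] by simp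
  then have "1 / cmod (z j - z k) \<le> 1 / (2 / pi * delta z j k)"
    using chord_ge_delta[OF assms(1,2)] by (metis le_imp_inverse_le inverse_eq_divide)
  then show ?thesis by simp
qed

lemma norm_lagrange_basis_le:
  assumes "j < s" "cmod x = 1"
  shows "cmod (poly (lagrange_basis s z j) x) \<le> lagrange_bound s z j"
proof -
  have "cmod (poly (lagrange_basis s z j) x) = (\<Prod>k\<in>{..<s} - {j}. cmod (x - z k) * (1 / cmod (z j - z k)))"
    by (simp add: poly_lagrange_basis prod_norm[symmetric] norm_divide)
  also have "\<dots> \<le> lagrange_bound s z j"
    unfolding lagrange_bound_def
  proof (rule prod_mono)
    fix k assume k: "k \<in> {..<s} - {j}"
    have "cmod (x - z k) \<le> 2"
      using norm_triangle_ineq4[of x "z k"] on_circle k assms by simp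
    then have "cmod (x - z k) * (1 / cmod (z j - z k)) \<le> 2 * (pi / (2 * delta z j k))"
      using inverse_chord_le k assms by (intro mult_mono) auto
    then show "0 \<le> cmod (x - z k) * (1 / cmod (z j - z k)) \<and>
        cmod (x - z k) * (1 / cmod (z j - z k)) \<le> pi / delta z j k" by simp
  qed
  finally show ?thesis .
qed

lemma norm_pderiv_lagrange_basis_le:
  assumes "j < s"
  shows "cmod (poly (pderiv (lagrange_basis s z j)) (z j))
           \<le> pi / 2 * (\<Sum>k\<in>{..<s} - {j}. 1 / delta z j k)"
proof -
  have "cmod (poly (pderiv (lagrange_basis s z j)) (z j)) \<le> (\<Sum>k\<in>{..<s} - {j}. 1 / cmod (z j - z k))"
    unfolding pderiv_lagrange_basis_at_node[OF distinct assms]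
    using norm_sum[of "\<lambda>k. 1 / (z j - z k)" "{..<s} - {j}"] by (simp add: norm_divide)
  also have "\<dots> \<le> (\<Sum>k\<in>{..<s} - {j}. pi / 2 * (1 / delta z j k))"
    using inverse_chord_le assms by (intro sum_mono) auto
  finally show ?thesis by (simp add: sum_distrib_left)
qed

lemma norm_hermite_value_basis_le:
  assumes "j < s" "cmod x = 1"
  shows "cmod (poly (hermite_value_basis s z j) x)
           \<le> (1 + 2 * (pi * (\<Sum>k\<in>{..<s} - {j}. 1 / delta z j k))) * (lagrange_bound s z j)\<^sup>2"
proof -
  define c where "c = 2 * poly (pderiv (lagrange_basis s z j)) (z j)"
  have "cmod (x - z j) \<le> 2"
    using norm_triangle_ineq4[of x "z j"] on_circle assms by simp
  then have "cmod (1 - c * (x - z j)) \<le> 1 + cmod c * 2"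
    using norm_triangle_ineq4[of 1 "c * (x - z j)"] mult_left_mono[of "cmod (x - z j)" 2 "cmod c"]
    by (simp add: norm_mult)
  also have "\<dots> \<le> 1 + 2 * (pi * (\<Sum>k\<in>{..<s} - {j}. 1 / delta z j k))"
    using norm_pderiv_lagrange_basis_le[OF assms(1)] by (simp add: c_def norm_mult)
  finally have "cmod (1 - c * (x - z j)) * (cmod (poly (lagrange_basis s z j) x))\<^sup>2
      \<le> (1 + 2 * (pi * (\<Sum>k\<in>{..<s} - {j}. 1 / delta z j k))) * (lagrange_bound s z j)\<^sup>2"
    using norm_lagrange_basis_le[OF assms] sum_inverse_delta_nonneg
    by (intro mult_mono power_mono) auto
  moreover have "poly (hermite_value_basis s z j) x = (1 - c * (x - z j)) * (poly (lagrange_basis s z j) x)\<^sup>2"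
    by (simp add: hermite_value_basis_def c_def algebra_simps)
  ultimately show ?thesis by (simp add: norm_mult norm_power)
qed

lemma norm_hermite_slope_basis_le:
  assumes "j < s" "cmod x = 1"
  shows "cmod (poly (hermite_slope_basis s z j) x) \<le> 2 * (lagrange_bound s z j)\<^sup>2"
proof -
  have "cmod (x - z j) \<le> 2"
    using norm_triangle_ineq4[of x "z j"] on_circle assms by simp
  then have "cmod (x - z j) * (cmod (poly (lagrange_basis s z j) x))\<^sup>2 \<le> 2 * (lagrange_bound s z j)\<^sup>2"
    using norm_lagrange_basis_le[OF assms] by (intro mult_mono power_mono) auto
  moreover have "poly (hermite_slope_basis s z j) x = (x - z j) * (poly (lagrange_basis s z j) x)\<^sup>2"
    by (simp add: hermite_slope_basis_def algebra_simps)
  ultimately show ?thesis by (simp add: norm_mult norm_power)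
qed

text \<open>For two nearly antipodal nodes the bound of \<open>norm_hermite_slope_basis_le\<close> is too weak;
  here \<open>|z\<^sub>j + z\<^sub>k|\<close> is small.\<close>
lemma norm_hermite_slope_basis_two_nodes_le:
  assumes "s = 2" "j < 2" "k < 2" "k \<noteq> j" "cmod x = 1"
  shows "cmod (poly (hermite_slope_basis s z j) x) \<le> (1 + cmod (z j + z k) / 2) * (lagrange_bound s z j)\<^sup>2"
proof -
  have others: "{..<s} - {j} = {k}" using assms by auto
  have jk: "j < s" "k < s" "k \<noteq> j" using assms by auto
  define D where "D = cmod (z j - z k)"
  have "0 < D" using distinct jk by (auto simp: D_def inj_on_def)
  have "poly (hermite_slope_basis s z j) x = (x - z j) * ((x - z k) / (z j - z k))\<^sup>2"
    by (simp add: hermite_slope_basis_def poly_lagrange_basis others algebra_simps)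
  then have "cmod (poly (hermite_slope_basis s z j) x) = cmod (x - z j) * (cmod (x - z k))\<^sup>2 / D\<^sup>2"
    by (simp add: D_def norm_mult norm_divide norm_power power_divide)
  also have "\<dots> \<le> (4 + 2 * cmod (z j + z k)) / D\<^sup>2"
    using unit_circle_distance_product_le[OF assms(5) on_circle on_circle] jk
    by (intro divide_right_mono) auto
  also have "\<dots> = (1 + cmod (z j + z k) / 2) * (2 * (1 / D))\<^sup>2"
    using \<open>0 < D\<close> by (simp add: power2_eq_square field_simps)
  also have "\<dots> \<le> (1 + cmod (z j + z k) / 2) * (lagrange_bound s z j)\<^sup>2"
    using inverse_chord_le[OF jk] \<open>0 < D\<close> delta_pos[OF jk]
    by (intro mult_left_mono power_mono) (auto simp: lagrange_bound_def others D_def field_simps)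
  finally show ?thesis .
qed

lemma two_nodes_weight_sq_le:
  assumes "j < s" "k < s" "k \<noteq> j"
  shows "(1 + cmod (z j + z k) / 2)\<^sup>2 \<le> 4 - 2 * (delta z j k / pi)\<^sup>2"
proof -
  define D e r where "D = cmod (z j - z k)" and "e = cmod (z j + z k)" and "r = delta z j k / pi"
  have "2 * r \<le> D"
    using chord_ge_delta assms by (simp add: D_def r_def)
  moreover have "0 \<le> r" using delta_pos[OF assms] by (simp add: r_def)
  ultimately have "4 * r\<^sup>2 \<le> D\<^sup>2"
    using power_mono[of "2 * r" D 2] by (simp add: power_mult_distrib)
  moreover have "e\<^sup>2 + D\<^sup>2 = 4"
    using parallelogram_law_complex[of "z j" "z k"] on_circle assms by (simp add: D_def e_def)
  moreover have "(1 + e / 2)\<^sup>2 + (1 - e / 2)\<^sup>2 = 2 + e\<^sup>2 / 2"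
    by (simp add: power2_eq_square field_simps)
  moreover have "0 \<le> (1 - e / 2)\<^sup>2" by simp
  ultimately show ?thesis unfolding e_def[symmetric] r_def[symmetric] by linarith
qed

lemma pi_sum_inverse_delta_ge:
  assumes "j < s"
  shows "real (s - 1) \<le> pi * (\<Sum>k\<in>{..<s} - {j}. 1 / delta z j k)"
proof -
  have "real (s - 1) = (\<Sum>k\<in>{..<s} - {j}. 1)" using assms by simp
  also have "\<dots> \<le> (\<Sum>k\<in>{..<s} - {j}. pi * (1 / delta z j k))"
    using delta_pos delta_le_pi assms by (intro sum_mono) (auto simp: field_simps)
  finally show ?thesis by (simp add: sum_distrib_left)
qed

lemma gamma_le:
  assumes "j < s" "2 \<le> s"
  shows "gamma s z j \<le> 2 / (5 * (pi * (\<Sum>k\<in>{..<s} - {j}. 1 / delta z j k)))"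
proof -
  have "1 \<le> real (s - 1)" using assms(2) by simp
  then have "0 < pi * (\<Sum>k\<in>{..<s} - {j}. 1 / delta z j k)"
    using pi_sum_inverse_delta_ge[OF assms(1)] by linarith
  then have "0 < (\<Sum>k\<in>{..<s} - {j}. 1 / delta z j k)"
    using zero_less_mult_pos pi_gt_zero by blast
  then show ?thesis by (simp add: gamma_def Let_def)
qed

lemma node_weight_pos:
  assumes "j < s"
  shows "0 < node_weight s z j"
  unfolding node_weight_def using gamma_pos[of s z j] assms
  by (intro mult_pos_pos prod_pos zero_less_power) (auto intro: delta_pos)

lemma hermite_slope_sup_norm_weight:
  assumes "j < s" "2 \<le> s"
  defines "t \<equiv> pi * (\<Sum>k\<in>{..<s} - {j}. 1 / delta z j k)"
  obtains q where
    "\<And>x. cmod x = 1 \<Longrightarrow> cmod (poly (hermite_slope_basis s z j) x) \<le> q * (lagrange_bound s z j)\<^sup>2"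
    "q\<^sup>2 \<le> 4" "2 \<le> t \<or> q\<^sup>2 \<le> 4 - 2 / t\<^sup>2"
proof (cases "s = 2")
  case True
  define k where "k = 1 - j"
  have k: "k < 2" "k \<noteq> j" using assms True by (auto simp: k_def less_2_cases_iff)
  then have "{..<s} - {j} = {k}" using True assms by auto
  then have "delta z j k / pi = 1 / t" by (simp add: t_def)
  then have weight: "(1 + cmod (z j + z k) / 2)\<^sup>2 \<le> 4 - 2 / t\<^sup>2"
    using two_nodes_weight_sq_le[of j k] assms k True by (simp add: power_divide)
  show ?thesis
  proof (rule that)
    show "cmod (poly (hermite_slope_basis s z j) x) \<le> (1 + cmod (z j + z k) / 2) * (lagrange_bound s z j)\<^sup>2"
      if "cmod x = 1" for x
      using norm_hermite_slope_basis_two_nodes_le[OF True _ k that] assms True by simp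
    have "0 \<le> 2 / t\<^sup>2" by simp
    then show "(1 + cmod (z j + z k) / 2)\<^sup>2 \<le> 4" using weight by linarith
  qed (use weight in simp)
next
  case False
  then have "2 \<le> t" using pi_sum_inverse_delta_ge[OF assms(1)] assms(2) by (simp add: t_def)
  then show ?thesis using that[of 2] norm_hermite_slope_basis_le[OF assms(1)] by simp
qed

lemma hermite_sup_norm_weights:
  assumes "j < s"
  obtains a q where
    "\<And>x. cmod x = 1 \<Longrightarrow> cmod (poly (hermite_value_basis s z j) x) \<le> a * (lagrange_bound s z j)\<^sup>2"
    "\<And>x. cmod x = 1 \<Longrightarrow> cmod (poly (hermite_slope_basis s z j) x) \<le> q * (lagrange_bound s z j)\<^sup>2"
    "(a\<^sup>2 + q\<^sup>2) * (gamma s z j)\<^sup>2 \<le> 2"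
proof -
  define t where "t = pi * (\<Sum>k\<in>{..<s} - {j}. 1 / delta z j k)"
  note value_bound = norm_hermite_value_basis_le[OF assms, folded t_def]
  show ?thesis
  proof (cases "s = 1")
    case True
    then have no_others: "{..<s} - {j} = {}" using assms by auto
    have "t = 0" "gamma s z j = 1 / 2" unfolding t_def gamma_def no_others by simp_all
    then have "((1 + 2 * t)\<^sup>2 + 2\<^sup>2) * (gamma s z j)\<^sup>2 \<le> 2" by (simp only:) (simp add: power_divide)
    then show ?thesis using that[OF value_bound norm_hermite_slope_basis_le[OF assms]] by simp
  next
    case False
    then have "2 \<le> s" using assms by simp
    then have "1 \<le> t" using pi_sum_inverse_delta_ge[OF assms] by (simp add: t_def)
    obtain q where slope_bound: "\<And>x. cmod x = 1 \<Longrightarrow>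
        cmod (poly (hermite_slope_basis s z j) x) \<le> q * (lagrange_bound s z j)\<^sup>2"
      and "q\<^sup>2 \<le> 4" and "2 \<le> t \<or> q\<^sup>2 \<le> 4 - 2 / t\<^sup>2"
      using hermite_slope_sup_norm_weight[OF assms \<open>2 \<le> s\<close>, folded t_def] by blast
    have "(1 + 2 * t)\<^sup>2 + q\<^sup>2 \<le> 25 / 2 * t\<^sup>2"
      by (rule hermite_weight_ineq) fact+
    moreover have "(gamma s z j)\<^sup>2 \<le> (2 / (5 * t))\<^sup>2"
      using gamma_le[OF assms \<open>2 \<le> s\<close>] gamma_pos[of s z j] by (intro power_mono) (auto simp: t_def)
    ultimately have "((1 + 2 * t)\<^sup>2 + q\<^sup>2) * (gamma s z j)\<^sup>2 \<le> 25 / 2 * t\<^sup>2 * (2 / (5 * t))\<^sup>2"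
      by (intro mult_mono) auto
    also have "\<dots> = 2" using \<open>1 \<le> t\<close> by (simp add: power2_eq_square field_simps)
    finally show ?thesis using that[OF value_bound slope_bound] by simp
  qed
qed

lemma hermite_row_norm_le:
  assumes "j < s"
  shows "(\<Sum>k<2 * s. (cmod (coeff (hermite_basis s z j) k))\<^sup>2)
           + (\<Sum>k<2 * s. (cmod (coeff (hermite_basis s z (s + j)) k))\<^sup>2)
         \<le> 2 * (pi ^ (2 * (s - 1)) / node_weight s z j)\<^sup>2"
proof -
  obtain a q where
    value_bound: "\<And>x. cmod x = 1 \<Longrightarrow> cmod (poly (hermite_value_basis s z j) x) \<le> a * (lagrange_bound s z j)\<^sup>2"
    and slope_bound: "\<And>x. cmod x = 1 \<Longrightarrow> cmod (poly (hermite_slope_basis s z j) x) \<le> q * (lagrange_bound s z j)\<^sup>2"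
    and weights: "(a\<^sup>2 + q\<^sup>2) * (gamma s z j)\<^sup>2 \<le> 2"
    using hermite_sup_norm_weights[OF assms] by blast
  define L where "L = (lagrange_bound s z j)\<^sup>2"
  have "degree (hermite_basis s z j) < 2 * s" "degree (hermite_basis s z (s + j)) < 2 * s"
    using assms by (simp_all add: degree_hermite_basis)
  moreover have "hermite_basis s z j = hermite_value_basis s z j"
    "hermite_basis s z (s + j) = hermite_slope_basis s z j"
    using assms by (simp_all add: hermite_basis_def)
  ultimately have "(\<Sum>k<2 * s. (cmod (coeff (hermite_basis s z j) k))\<^sup>2) \<le> (a * L)\<^sup>2"
    "(\<Sum>k<2 * s. (cmod (coeff (hermite_basis s z (s + j)) k))\<^sup>2) \<le> (q * L)\<^sup>2"
    using value_bound slope_bound unfolding L_def by (metis sum_cmod_coeff_sq_le)+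
  moreover have "(a * L)\<^sup>2 + (q * L)\<^sup>2 = (a\<^sup>2 + q\<^sup>2) * (gamma s z j)\<^sup>2 * (L / gamma s z j)\<^sup>2"
    using gamma_pos[of s z j] by (simp add: field_simps)
  moreover have "\<dots> \<le> 2 * (L / gamma s z j)\<^sup>2"
    using weights by (intro mult_right_mono) auto
  ultimately have "(\<Sum>k<2 * s. (cmod (coeff (hermite_basis s z j) k))\<^sup>2)
      + (\<Sum>k<2 * s. (cmod (coeff (hermite_basis s z (s + j)) k))\<^sup>2) \<le> 2 * (L / gamma s z j)\<^sup>2"
    by linarith
  then show ?thesis unfolding L_def lagrange_bound_sq_div_gamma[OF assms] .
qed

lemma hermite_basis_frobenius_le:
  "(\<Sum>r<2 * s. \<Sum>k<2 * s. (cmod (coeff (hermite_basis s z r) k))\<^sup>2)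
     \<le> 2 * s * (pi ^ (2 * (s - 1)) / Min (node_weight s z ` {..<s}))\<^sup>2"
proof -
  define R where "R r = (\<Sum>k<2 * s. (cmod (coeff (hermite_basis s z r) k))\<^sup>2)" for r
  define m where "m = Min (node_weight s z ` {..<s})"
  have "R j + R (s + j) \<le> 2 * (pi ^ (2 * (s - 1)) / m)\<^sup>2" if "j < s" for j
  proof -
    have "m \<in> node_weight s z ` {..<s}" unfolding m_def using that by (intro Min_in) auto
    then have "0 < m" using node_weight_pos by auto
    moreover have "m \<le> node_weight s z j" unfolding m_def using that by (intro Min_le) auto
    ultimately have "pi ^ (2 * (s - 1)) / node_weight s z j \<le> pi ^ (2 * (s - 1)) / m"
      by (intro divide_left_mono) auto
    then have "(pi ^ (2 * (s - 1)) / node_weight s z j)\<^sup>2 \<le> (pi ^ (2 * (s - 1)) / m)\<^sup>2"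
      using node_weight_pos[OF that] by (intro power_mono) auto
    then show ?thesis using hermite_row_norm_le[OF that] unfolding R_def by linarith
  qed
  then have "(\<Sum>j<s. R j + R (s + j)) \<le> s * (2 * (pi ^ (2 * (s - 1)) / m)\<^sup>2)"
    using sum_bounded_above[of "{..<s}" "\<lambda>j. R j + R (s + j)"] by simp
  moreover have "(\<Sum>r<s + n. R r) = (\<Sum>r<s. R r) + (\<Sum>j<n. R (s + j))" for n
    by (induction n) simp_all
  then have "(\<Sum>r<2 * s. R r) = (\<Sum>j<s. R j + R (s + j))"
    by (simp add: mult_2 sum.distrib)
  ultimately show ?thesis unfolding R_def m_def by simp
qed

end

theorem proposition4p3:
  fixes s :: nat and z :: "nat \<Rightarrow> complex"
  assumes "s \<ge> 1"
    and "inj_on z {..<s}"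
    and "\<And>j. j < s \<Longrightarrow> cmod (z j) = 1"
  shows "sigma_min (2 * s) (conf_vandermonde s z)
           \<ge> pi powr (2 * (1 - real s)) / sqrt (2 * real s) *
             Min ((\<lambda>j. gamma s z j * (\<Prod>k\<in>{..<s} - {j}. (delta z j k)\<^sup>2)) ` {..<s})"
proof -
  interpret unit_nodes s z using assms(2,3) by unfold_locales
  define m where "m = Min (node_weight s z ` {..<s})"
  have "m \<in> node_weight s z ` {..<s}" unfolding m_def using assms(1) by (intro Min_in) (auto simp: lessThan_empty_iff)
  then have "0 < m" using node_weight_pos by auto
  have "1 / (sqrt (2 * s) * (pi ^ (2 * (s - 1)) / m)) \<le> sigma_min (2 * s) (conf_vandermonde s z)"
  proof (rule sigma_min_ge_left_inverse)
    show "(\<Sum>r<2 * s. \<Sum>k<2 * s. (cmod (coeff (hermite_basis s z r) k))\<^sup>2)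
        \<le> (sqrt (2 * s) * (pi ^ (2 * (s - 1)) / m))\<^sup>2"
      unfolding power_mult_distrib[of "sqrt _"] using hermite_basis_frobenius_le by (simp add: m_def)
  qed (use assms(1) hermite_basis_left_inverse[OF distinct] \<open>0 < m\<close> in auto)
  moreover have "pi powr (2 * (1 - real s)) = 1 / pi powr real (2 * (s - 1))"
    using assms(1) by (simp flip: powr_minus_divide)
  then have "pi powr (2 * (1 - real s)) = 1 / pi ^ (2 * (s - 1))"
    by (simp only: powr_realpow[OF pi_gt_zero])
  ultimately show ?thesis by (simp add: m_def node_weight_def[abs_def] mult.commute)
qed

end
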